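(* Let $(\theta_t)_{t\in\mathbb R}$ be a smooth green path and $t_0<t_1$. If $X_0\in\mathcal W(\theta_{t_0})$ and $X_1\in\mathcal W(\theta_{t_1})$, then every strict morphism $X_0\to X_1$ is zero. Moreover, for each $t$, every strict morphism between two non-isomorphic objects of $\mathcal W_0(\theta_t)$ is zero.
   Context: Let $\Lambda$ be a finite dimensional algebra over a field with $n$ isoclasses of simple modules, and $\mathrm{mod}\text-\Lambda$ the category of finitely generated right $\Lambda$-modules. Fix a torsion class $\mathcal G\subseteq\mathrm{mod}\text-\Lambda$ (closed under isomorphisms, extensions and quotients). For $B\in\mathcal G$, a subobject of $B$ is a submodule in $\mathcal G$; a subobject $A\subseteq B$ is strict if $A\cap B'\in\mathcal G$ for every subobject $B'$ of $B$; a strict quotient of $B$ is $B/A$ with $A$ a strict subobject. A strict morphism is a homomorphism $f:A\to B$ with $A,B\in\mathcal G$ such that $\ker f\in\mathcal G$ is a strict subobject of $A$ and $\operatorname{im} f$ is a strict subobject of $B$. Let $V_\Lambda=\mathrm{Hom}_{\mathbb Z}(K_0\Lambda,\mathbb R)\cong\mathbb R^n$; $\theta(M)$ denotes $\theta$ applied to the dimension vector of $M$. For $M\in\mathcal G$, $D_{\mathcal G}(M)$ is the set of $\theta$ with $\theta(M)=0$ and $\theta(M')\le0$ for every strict subobject $M'$ of $M$. $\mathcal W(\theta)$ is the class of $X\in\mathcal G$ with $\theta\in D_{\mathcal G}(X)$, and $\mathcal W_0(\theta)$ is the class of nonzero $X\in\mathcal W(\theta)$ such that no nonzero proper strict subobject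 of $X$ lies in $\mathcal W(\theta)$. A smooth green path is a smooth map $t\mapsto\theta_t$, $\mathbb R\to V_\Lambda$, such that: (1) whenever $\theta_{t_0}\in D_{\mathcal G}(M)$ for some nonzero $M\in\mathcal G$, $\frac{d}{dt}\theta_t(M)|_{t=t_0}>0$; (2) there is $T$ such that $\theta_t(M)>0$ for all $t>T$ and all nonzero $M\in\mathcal G$; (3) there is $T'$ such that $\theta_t(M)<0$ for all $t<T'$ and all nonzero $M\in\mathcal G$. *)

theory Defs
  imports "HOL-Analysis.Analysis" "HOL-Library.Function_Algebras"
begin

text \<open>The algebra Lambda is the ring type 'l, a k-algebra via a central ring
homomorphism iota from the field 'k, finite dimensional over k.\<close>

definition fd_algebra :: "('k::field \<Rightarrow> 'l::ring_1) \<Rightarrow> bool" where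
  "fd_algebra \<iota> \<longleftrightarrow>
     \<iota> 1 = 1 \<and> (\<forall>a b. \<iota> (a + b) = \<iota> a + \<iota> b) \<and> (\<forall>a b. \<iota> (a * b) = \<iota> a * \<iota> b) \<and>
     (\<forall>a x. \<iota> a * x = x * \<iota> a) \<and>
     (\<exists>B. finite B \<and> (\<forall>x. \<exists>c. x = (\<Sum>b\<in>B. \<iota> (c b) * b)))"

text \<open>Universe of modules: a module is a pair (M, rho) where M is an additive
subgroup of the ambient group nat => 'k and rho is a right action of 'l.
Every finitely generated Lambda-module (a finite dimensional k-space) is
isomorphic to such a pair, so this universe represents all of mod-Lambda.\<close>

type_synonym ('k,'l) rmod = "(nat \<Rightarrow> 'k) set \<times> ((nat \<Rightarrow> 'k) \<Rightarrow> 'l \<Rightarrow> (nat \<Rightarrow> 'k))"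

definition right_module :: "('k::field,'l::ring_1) rmod \<Rightarrow> bool" where
  "right_module X \<longleftrightarrow> (let M = fst X; \<rho> = snd X in
     0 \<in> M \<and> (\<forall>x\<in>M. \<forall>y\<in>M. x + y \<in> M) \<and> (\<forall>x\<in>M. \<forall>a. \<rho> x a \<in> M) \<and>
     (\<forall>x\<in>M. \<forall>y\<in>M. \<forall>a. \<rho> (x + y) a = \<rho> x a + \<rho> y a) \<and>
     (\<forall>x\<in>M. \<forall>a b. \<rho> x (a + b) = \<rho> x a + \<rho> x b) \<and>
     (\<forall>x\<in>M. \<forall>a b. \<rho> x (a * b) = \<rho> (\<rho> x a) b) \<and>
     (\<forall>x\<in>M. \<rho> x 1 = x))"

definition fg_module :: "('k::field,'l::ring_1) rmod \<Rightarrow> bool" where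
  "fg_module X \<longleftrightarrow> right_module X \<and>
     (\<exists>S. finite S \<and> S \<subseteq> fst X \<and> (\<forall>x\<in>fst X. \<exists>c. x = (\<Sum>s\<in>S. snd X s (c s))))"

definition submod :: "(nat \<Rightarrow> 'k::field) set \<Rightarrow> ('k,'l::ring_1) rmod \<Rightarrow> bool" where
  "submod N X \<longleftrightarrow> N \<subseteq> fst X \<and> right_module (N, snd X)"

definition module_hom ::
  "((nat \<Rightarrow> 'k) \<Rightarrow> (nat \<Rightarrow> 'k)) \<Rightarrow> ('k::field,'l::ring_1) rmod \<Rightarrow> ('k,'l) rmod \<Rightarrow> bool" where
  "module_hom f X Y \<longleftrightarrow> (\<forall>x\<in>fst X. f x \<in> fst Y) \<and>
     (\<forall>x\<in>fst X. \<forall>y\<in>fst X. f (x + y) = f x + f y) \<and>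
     (\<forall>x\<in>fst X. \<forall>a. f (snd X x a) = snd Y (f x) a)"

definition hom_ker :: "((nat \<Rightarrow> 'k) \<Rightarrow> (nat \<Rightarrow> 'k)) \<Rightarrow> ('k::field,'l) rmod \<Rightarrow> (nat \<Rightarrow> 'k) set" where
  "hom_ker f X = {x \<in> fst X. f x = 0}"

definition mod_iso :: "('k::field,'l::ring_1) rmod \<Rightarrow> ('k,'l) rmod \<Rightarrow> bool" where
  "mod_iso X Y \<longleftrightarrow> (\<exists>f. module_hom f X Y \<and> bij_betw f (fst X) (fst Y))"

definition torsion_class :: "('k::field,'l::ring_1) rmod set \<Rightarrow> bool" where
  "torsion_class G \<longleftrightarrow>
     (\<forall>X\<in>G. fg_module X) \<and>
     (\<forall>X Y. X \<in> G \<longrightarrow> fg_module Y \<longrightarrow> mod_iso X Y \<longrightarrow> Y \<in> G) \<and>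
     (\<forall>X Y f. X \<in> G \<longrightarrow> fg_module Y \<longrightarrow> module_hom f X Y \<longrightarrow> f ` fst X = fst Y \<longrightarrow> Y \<in> G) \<and>
     (\<forall>B N C g. fg_module B \<longrightarrow> submod N B \<longrightarrow> (N, snd B) \<in> G \<longrightarrow> C \<in> G \<longrightarrow>
        module_hom g B C \<longrightarrow> g ` fst B = fst C \<longrightarrow> hom_ker g B = N \<longrightarrow> B \<in> G)"

definition subobj :: "('k::field,'l::ring_1) rmod set \<Rightarrow> (nat \<Rightarrow> 'k) set \<Rightarrow> ('k,'l) rmod \<Rightarrow> bool" where
  "subobj G A B \<longleftrightarrow> submod A B \<and> (A, snd B) \<in> G"

definition strict_subobj :: "('k::field,'l::ring_1) rmod set \<Rightarrow> (nat \<Rightarrow> 'k) set \<Rightarrow> ('k,'l) rmod \<Rightarrow> bool" where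
  "strict_subobj G A B \<longleftrightarrow> subobj G A B \<and> (\<forall>B'. subobj G B' B \<longrightarrow> (A \<inter> B', snd B) \<in> G)"

definition strict_morphism ::
  "('k::field,'l::ring_1) rmod set \<Rightarrow> ((nat \<Rightarrow> 'k) \<Rightarrow> (nat \<Rightarrow> 'k)) \<Rightarrow> ('k,'l) rmod \<Rightarrow> ('k,'l) rmod \<Rightarrow> bool" where
  "strict_morphism G f X Y \<longleftrightarrow> X \<in> G \<and> Y \<in> G \<and> module_hom f X Y \<and>
     strict_subobj G (hom_ker f X) X \<and> strict_subobj G (f ` fst X) Y"

text \<open>Elements of V_Lambda = Hom(K_0 Lambda, R): real valued functions on
finitely generated modules that are isomorphism invariant and additive on
short exact sequences (universal property of the Grothendieck group);
theta(M) is then theta applied to the class (dimension vector) of M.\<close>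

definition V_elem :: "(('k::field,'l::ring_1) rmod \<Rightarrow> real) \<Rightarrow> bool" where
  "V_elem \<theta> \<longleftrightarrow>
     (\<forall>X Y. fg_module X \<longrightarrow> fg_module Y \<longrightarrow> mod_iso X Y \<longrightarrow> \<theta> X = \<theta> Y) \<and>
     (\<forall>B N C g. fg_module B \<longrightarrow> submod N B \<longrightarrow> fg_module C \<longrightarrow> module_hom g B C \<longrightarrow>
        g ` fst B = fst C \<longrightarrow> hom_ker g B = N \<longrightarrow> \<theta> B = \<theta> (N, snd B) + \<theta> C)"

definition in_D :: "('k::field,'l::ring_1) rmod set \<Rightarrow> (('k,'l) rmod \<Rightarrow> real) \<Rightarrow> ('k,'l) rmod \<Rightarrow> bool" where
  "in_D G \<theta> M \<longleftrightarrow> \<theta> M = 0 \<and> (\<forall>A. strict_subobj G A M \<longrightarrow> \<theta> (A, snd M) \<le> 0)"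

definition W_cls :: "('k::field,'l::ring_1) rmod set \<Rightarrow> (('k,'l) rmod \<Rightarrow> real) \<Rightarrow> ('k,'l) rmod set" where
  "W_cls G \<theta> = {X \<in> G. in_D G \<theta> X}"

definition W0_cls :: "('k::field,'l::ring_1) rmod set \<Rightarrow> (('k,'l) rmod \<Rightarrow> real) \<Rightarrow> ('k,'l) rmod set" where
  "W0_cls G \<theta> = {X \<in> W_cls G \<theta>. fst X \<noteq> {0} \<and>
     (\<forall>A. strict_subobj G A X \<longrightarrow> A \<noteq> {0} \<longrightarrow> A \<noteq> fst X \<longrightarrow> (A, snd X) \<notin> W_cls G \<theta>)}"

definition smooth_real :: "(real \<Rightarrow> real) \<Rightarrow> bool" where
  "smooth_real f \<longleftrightarrow> (\<forall>k x. (deriv ^^ k) f differentiable (at x))"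

definition smooth_green_path :: "('k::field,'l::ring_1) rmod set \<Rightarrow> (real \<Rightarrow> ('k,'l) rmod \<Rightarrow> real) \<Rightarrow> bool" where
  "smooth_green_path G \<theta> \<longleftrightarrow>
     (\<forall>t. V_elem (\<theta> t)) \<and>
     (\<forall>X. fg_module X \<longrightarrow> smooth_real (\<lambda>t. \<theta> t X)) \<and>
     (\<forall>t0 M. M \<in> G \<longrightarrow> fst M \<noteq> {0} \<longrightarrow> in_D G (\<theta> t0) M \<longrightarrow> deriv (\<lambda>t. \<theta> t M) t0 > 0) \<and>
     (\<exists>T. \<forall>t>T. \<forall>M\<in>G. fst M \<noteq> {0} \<longrightarrow> \<theta> t M > 0) \<and>
     (\<exists>T'. \<forall>t<T'. \<forall>M\<in>G. fst M \<noteq> {0} \<longrightarrow> \<theta> t M < 0)"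

end

theory Submission
  imports Defs
begin

(* If every strict subobject A of N satisfies theta_t1(A) <= 0, then theta_t(N) < 0 for all t < t1.
   By induction on the length of N: at any time s <= t1 with theta_s(N) = 0 the proper nonzero
   strict subobjects are already negative, so theta_s lies in D(N) and the green path makes
   s |-> theta_s(N) cross zero upwards; a differentiable function that is nonnegative at t and
   crosses zero only upwards stays positive, contradicting theta_t1(N) <= 0.
   For a strict morphism X0 -> X1 this makes theta_t0(im f) negative unless im f = 0, whereas
   additivity on 0 -> ker f -> X0 -> im f -> 0 together with X0 in W(theta_t0) forces
   theta_t0(im f) >= 0. For the second claim, kernel and image of a strict morphism inside W(theta)
   lie in W(theta) again, so minimality in W_0(theta) leaves only zero maps and isomorphisms. *)

context
  fixes M :: "(nat \<Rightarrow> 'k::field) set" and \<rho> :: "(nat \<Rightarrow> 'k) \<Rightarrow> 'l::ring_1 \<Rightarrow> nat \<Rightarrow> 'k"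
  assumes rm: "right_module (M, \<rho>)"
begin

lemma right_module_zero_mem: "0 \<in> M"
  using rm by (simp add: right_module_def)

lemma right_module_add_mem: "x \<in> M \<Longrightarrow> y \<in> M \<Longrightarrow> x + y \<in> M"
  using rm by (simp add: right_module_def)

lemma right_module_act_mem: "x \<in> M \<Longrightarrow> \<rho> x a \<in> M"
  using rm by (simp add: right_module_def)

lemma right_module_add_act: "x \<in> M \<Longrightarrow> y \<in> M \<Longrightarrow> \<rho> (x + y) a = \<rho> x a + \<rho> y a"
  using rm by (simp add: right_module_def)

lemma right_module_act_add: "x \<in> M \<Longrightarrow> \<rho> x (a + b) = \<rho> x a + \<rho> x b"
  using rm by (simp add: right_module_def)

lemma right_module_act_mult: "x \<in> M \<Longrightarrow> \<rho> x (a * b) = \<rho> (\<rho> x a) b"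
  using rm by (simp add: right_module_def)

lemma right_module_act_one: "x \<in> M \<Longrightarrow> \<rho> x 1 = x"
  using rm by (simp add: right_module_def)

lemma right_module_act_zero: "x \<in> M \<Longrightarrow> \<rho> x 0 = 0"
  using right_module_act_add[of x 0 0] by simp

lemma right_module_act_minus_one: "x \<in> M \<Longrightarrow> \<rho> x (-1) = - x"
  using right_module_act_add[of x 1 "-1"] right_module_act_zero right_module_act_one
  by (simp add: eq_neg_iff_add_eq_0 add.commute)

lemma right_module_zero_act: "\<rho> 0 a = 0"
  using right_module_add_act[OF right_module_zero_mem right_module_zero_mem, of a] by simp

lemma right_module_minus_mem: "x \<in> M \<Longrightarrow> - x \<in> M"
  using right_module_act_mem right_module_act_minus_one by metis

lemma right_module_sum_mem: "finite F \<Longrightarrow> v ` F \<subseteq> M \<Longrightarrow> sum v F \<in> M"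
  by (induction F rule: finite_induct) (auto intro: right_module_zero_mem right_module_add_mem)

lemma right_module_sum_act: "finite F \<Longrightarrow> v ` F \<subseteq> M \<Longrightarrow> \<rho> (sum v F) a = (\<Sum>i\<in>F. \<rho> (v i) a)"
  by (induction F rule: finite_induct)
    (auto simp: right_module_zero_act right_module_add_act right_module_sum_mem)

lemma right_module_act_sum: "finite F \<Longrightarrow> x \<in> M \<Longrightarrow> \<rho> x (sum c F) = (\<Sum>i\<in>F. \<rho> x (c i))"
  by (induction F rule: finite_induct) (auto simp: right_module_act_zero right_module_act_add)

end

lemma fd_algebra_hom:
  assumes "fd_algebra \<iota>"
  shows "\<iota> (a + b) = \<iota> a + \<iota> b" "\<iota> (a * b) = \<iota> a * \<iota> b" "\<iota> a * x = x * \<iota> a" "\<iota> 0 = 0"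
proof -
  show add: "\<iota> (a + b) = \<iota> a + \<iota> b" for a b using assms unfolding fd_algebra_def by blast
  show "\<iota> (a * b) = \<iota> a * \<iota> b" "\<iota> a * x = x * \<iota> a" using assms unfolding fd_algebra_def by blast+
  show "\<iota> 0 = 0" using add[of 0 0] by simp
qed

definition lin_comb ::
  "('k::field \<Rightarrow> 'l::ring_1) \<Rightarrow> ((nat \<Rightarrow> 'k) \<Rightarrow> 'l \<Rightarrow> nat \<Rightarrow> 'k) \<Rightarrow> 'j set \<Rightarrow> ('j \<Rightarrow> nat \<Rightarrow> 'k)
    \<Rightarrow> ('j \<Rightarrow> 'k) \<Rightarrow> nat \<Rightarrow> 'k" where
  "lin_comb \<iota> \<rho> J w c = (\<Sum>j\<in>J. \<rho> (w j) (\<iota> (c j)))"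

lemma fg_module_finite_k_span:
  fixes \<iota> :: "'k::field \<Rightarrow> 'l::ring_1"
  assumes fd: "fd_algebra \<iota>" and fg: "fg_module (M, \<rho>)"
  obtains J :: "((nat \<Rightarrow> 'k) \<times> 'l) set" and w
  where "finite J" "w ` J \<subseteq> M" "\<And>x. x \<in> M \<Longrightarrow> \<exists>c. x = lin_comb \<iota> \<rho> J w c"
proof -
  have rm: "right_module (M, \<rho>)" using fg by (simp add: fg_module_def)
  obtain S where S: "finite S" "S \<subseteq> M" "\<forall>x\<in>M. \<exists>c. x = (\<Sum>s\<in>S. \<rho> s (c s))"
    using fg unfolding fg_module_def by auto
  obtain B where B: "finite B" "\<forall>y. \<exists>d. y = (\<Sum>b\<in>B. \<iota> (d b) * b)"
    using fd unfolding fd_algebra_def by blast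
  from choice[OF B(2)] obtain D where D: "\<And>y. y = (\<Sum>b\<in>B. \<iota> (D y b) * b)" by blast
  define w where "w = (\<lambda>(s, b). \<rho> s b)"
  have "\<exists>c. x = lin_comb \<iota> \<rho> (S \<times> B) w c" if "x \<in> M" for x
  proof -
    obtain c where c: "x = (\<Sum>s\<in>S. \<rho> s (c s))" using S(3) \<open>x \<in> M\<close> by blast
    have "\<rho> s (c s) = (\<Sum>b\<in>B. \<rho> (\<rho> s b) (\<iota> (D (c s) b)))" if "s \<in> S" for s
    proof -
      have s: "s \<in> M" using that S(2) by auto
      have "\<rho> s (c s) = (\<Sum>b\<in>B. \<rho> s (\<iota> (D (c s) b) * b))"
        using D[of "c s"] right_module_act_sum[OF rm B(1) s] by metis
      also have "\<dots> = (\<Sum>b\<in>B. \<rho> (\<rho> s b) (\<iota> (D (c s) b)))"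
        by (rule sum.cong[OF refl])
          (simp only: fd_algebra_hom(3)[OF fd, of _ b for b] right_module_act_mult[OF rm s])
      finally show ?thesis .
    qed
    then have "x = (\<Sum>s\<in>S. \<Sum>b\<in>B. \<rho> (\<rho> s b) (\<iota> (D (c s) b)))" using c by simp
    also have "\<dots> = lin_comb \<iota> \<rho> (S \<times> B) w (\<lambda>(s, b). D (c s) b)"
      by (simp add: lin_comb_def w_def sum.cartesian_product case_prod_beta)
    finally show ?thesis by blast
  qed
  moreover have "w ` (S \<times> B) \<subseteq> M" using S(2) right_module_act_mem[OF rm] by (auto simp: w_def)
  ultimately show thesis using that[of "S \<times> B" w] S(1) B(1) by blast
qed

context
  fixes \<iota> :: "'k::field \<Rightarrow> 'l::ring_1" and M :: "(nat \<Rightarrow> 'k) set"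
    and \<rho> :: "(nat \<Rightarrow> 'k) \<Rightarrow> 'l \<Rightarrow> nat \<Rightarrow> 'k" and J :: "'j set" and w
  assumes fd: "fd_algebra \<iota>" and rm: "right_module (M, \<rho>)"
    and J: "finite J" and w: "w ` J \<subseteq> M"
begin

lemma lin_comb_zero: "lin_comb \<iota> \<rho> J w 0 = 0"
  using w by (simp add: lin_comb_def fd_algebra_hom(4)[OF fd] right_module_act_zero[OF rm] image_subset_iff)

lemma lin_comb_add: "lin_comb \<iota> \<rho> J w (c + d) = lin_comb \<iota> \<rho> J w c + lin_comb \<iota> \<rho> J w d"
  using w by (simp add: lin_comb_def fd_algebra_hom(1)[OF fd] right_module_act_add[OF rm]
      image_subset_iff sum.distrib)

lemma lin_comb_scale: "lin_comb \<iota> \<rho> J w (\<lambda>j. a * c j) = \<rho> (lin_comb \<iota> \<rho> J w c) (\<iota> a)"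
proof -
  have "lin_comb \<iota> \<rho> J w (\<lambda>j. a * c j) = (\<Sum>j\<in>J. \<rho> (\<rho> (w j) (\<iota> (c j))) (\<iota> a))"
    unfolding lin_comb_def
  proof (rule sum.cong[OF refl])
    fix j assume "j \<in> J"
    have "\<iota> (a * c j) = \<iota> (c j) * \<iota> a"
      by (simp only: mult.commute[of a] fd_algebra_hom(2)[OF fd])
    then show "\<rho> (w j) (\<iota> (a * c j)) = \<rho> (\<rho> (w j) (\<iota> (c j))) (\<iota> a)"
      using \<open>j \<in> J\<close> w right_module_act_mult[OF rm] by auto
  qed
  also have "\<dots> = \<rho> (lin_comb \<iota> \<rho> J w c) (\<iota> a)"
    unfolding lin_comb_def using w
    by (intro right_module_sum_act[OF rm J, symmetric]) (auto intro: right_module_act_mem[OF rm])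
  finally show ?thesis .
qed

end

interpretation coord: vector_space "\<lambda>(a::'k::field) (c::'j \<Rightarrow> 'k). \<lambda>j. a * c j"
  by unfold_locales (auto simp: algebra_simps)

lemma (in vector_space) dim_less_if_psubset:
  assumes U: "subspace U" and UV: "U \<subset> V" and V: "V \<subseteq> span W" "finite W"
  shows "dim U < dim V"
proof -
  obtain BV where BV: "BV \<subseteq> V" "independent BV" "V \<subseteq> span BV" "card BV = dim V"
    using basis_exists by blast
  obtain BU where BU: "BU \<subseteq> U" "independent BU" "U \<subseteq> span BU" "card BU = dim U"
    using basis_exists by blast
  have "span BU = U" using BU U span_minimal by blast
  obtain x where x: "x \<in> V" "x \<notin> U" using UV by blast
  have ind: "independent (insert x BU)"
    using BU(2) x(2) \<open>span BU = U\<close> independent_insertI by auto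
  have "finite BV" using independent_span_bound[OF V(2) BV(2)] BV(1) V(1) by auto
  have "insert x BU \<subseteq> span BV" using BU(1) UV x BV(3) by blast
  then have "card (insert x BU) \<le> card BV" and "finite BU"
    using independent_span_bound[OF \<open>finite BV\<close> ind] by auto
  moreover have "x \<notin> BU" using BU(1) x by auto
  ultimately show ?thesis using BU(4) BV(4) by simp
qed

lemma coord_span_finite_support:
  fixes c :: "'j \<Rightarrow> 'k::field"
  assumes "finite J" and "\<forall>j. j \<notin> J \<longrightarrow> c j = 0"
  shows "c \<in> coord.span ((\<lambda>j i. if i = j then 1 else 0) ` J)"
  using assms
proof (induction J arbitrary: c rule: finite_induct)
  case empty
  then have "c = 0" by auto
  then show ?case by (metis coord.span_zero)
next
  case (insert j J)
  define \<delta> :: "'j \<Rightarrow> 'j \<Rightarrow> 'k" where "\<delta> = (\<lambda>j i. if i = j then 1 else 0)"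
  define d where "d i = c i - c j * \<delta> j i" for i
  have "\<forall>i. i \<notin> J \<longrightarrow> d i = 0" using insert.prems by (auto simp: d_def \<delta>_def)
  then have "d \<in> coord.span (\<delta> ` J)" by (rule insert.IH[folded \<delta>_def])
  then have "d \<in> coord.span (\<delta> ` insert j J)"
    using coord.span_mono[of "\<delta> ` J" "\<delta> ` insert j J"] by blast
  moreover have "(\<lambda>i. c j * \<delta> j i) \<in> coord.span (\<delta> ` insert j J)"
    by (intro coord.span_scale coord.span_base) auto
  ultimately have "d + (\<lambda>i. c j * \<delta> j i) \<in> coord.span (\<delta> ` insert j J)"
    by (rule coord.span_add)
  moreover have "d + (\<lambda>i. c j * \<delta> j i) = c" by (simp add: d_def fun_eq_iff)
  ultimately show ?case by (simp add: \<delta>_def)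
qed

(* The k-action x |-> rho x (iota a) on a module need not be the pointwise scaling of the
   ambient space nat => 'k, so a submodule A is measured by the dimension of its preimage under
   the k-linear coordinate map lin_comb, restricted to functions supported on the finite set J. *)
lemma fg_module_length:
  fixes \<iota> :: "'k::field \<Rightarrow> 'l::ring_1" and \<rho> :: "(nat \<Rightarrow> 'k) \<Rightarrow> 'l \<Rightarrow> nat \<Rightarrow> 'k"
  assumes fd: "fd_algebra \<iota>" and fg: "fg_module (M, \<rho>)"
  obtains \<mu> :: "(nat \<Rightarrow> 'k) set \<Rightarrow> nat"
  where "\<And>A B. A \<subset> B \<Longrightarrow> B \<subseteq> M \<Longrightarrow> right_module (A, \<rho>) \<Longrightarrow> \<mu> A < \<mu> B"
proof -
  have rm: "right_module (M, \<rho>)" using fg by (simp add: fg_module_def)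
  obtain J :: "((nat \<Rightarrow> 'k) \<times> 'l) set" and w where J: "finite J" and w: "w ` J \<subseteq> M"
    and span: "\<And>x. x \<in> M \<Longrightarrow> \<exists>c. x = lin_comb \<iota> \<rho> J w c"
    using fg_module_finite_k_span[OF fd fg] by blast
  define P where "P A = {c. (\<forall>j. j \<notin> J \<longrightarrow> c j = 0) \<and> lin_comb \<iota> \<rho> J w c \<in> A}" for A
  have subspace: "coord.subspace (P A)" if A: "right_module (A, \<rho>)" for A
    unfolding coord.subspace_def P_def
    using lin_comb_zero[OF fd rm J w] lin_comb_add[OF fd rm J w] lin_comb_scale[OF fd rm J w]
      right_module_zero_mem[OF A] right_module_add_mem[OF A] right_module_act_mem[OF A]
    by auto
  have psubset: "P A \<subset> P B" if AB: "A \<subset> B" "B \<subseteq> M" for A B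
  proof -
    obtain x where x: "x \<in> B" "x \<notin> A" using AB by blast
    then obtain c where c: "x = lin_comb \<iota> \<rho> J w c" using span AB by blast
    define c' where "c' j = (if j \<in> J then c j else 0)" for j
    have "lin_comb \<iota> \<rho> J w c' = x" unfolding c lin_comb_def c'_def by (rule sum.cong) auto
    then have "c' \<in> P B - P A" using x by (auto simp: P_def c'_def)
    moreover have "P A \<subseteq> P B" using AB by (auto simp: P_def)
    ultimately show ?thesis by blast
  qed
  have "P A \<subseteq> coord.span ((\<lambda>j i. if i = j then 1 else 0) ` J)" for A
    using coord_span_finite_support[OF J] by (auto simp: P_def)
  then show thesis
    using that[of "\<lambda>A. coord.dim (P A)"] coord.dim_less_if_psubset[OF subspace psubset] J by blast
qed

lemma torsion_class_fg: "torsion_class G \<Longrightarrow> X \<in> G \<Longrightarrow> fg_module X"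
  unfolding torsion_class_def by blast

lemma fg_module_right_module: "fg_module X \<Longrightarrow> right_module X"
  unfolding fg_module_def by simp

lemma strict_subobj_refl:
  assumes "torsion_class G" and "X \<in> G"
  shows "strict_subobj G (fst X) X"
  using assms fg_module_right_module[OF torsion_class_fg[OF assms]]
  unfolding strict_subobj_def subobj_def submod_def by (auto simp: Int_absorb1)

lemma strict_subobj_trans:
  assumes tc: "torsion_class G" and AB: "strict_subobj G A B" and CA: "strict_subobj G C (A, snd B)"
  shows "strict_subobj G C B"
  unfolding strict_subobj_def
proof (intro conjI allI impI)
  show "subobj G C B" using AB CA unfolding strict_subobj_def subobj_def submod_def by auto
  fix B' assume "subobj G B' B"
  then have AB': "(A \<inter> B', snd B) \<in> G" using AB unfolding strict_subobj_def by blast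
  then have "subobj G (A \<inter> B') (A, snd B)"
    using fg_module_right_module[OF torsion_class_fg[OF tc AB']] unfolding subobj_def submod_def by auto
  then have "(C \<inter> (A \<inter> B'), snd B) \<in> G" using CA unfolding strict_subobj_def by auto
  moreover have "C \<inter> (A \<inter> B') = C \<inter> B'"
    using CA unfolding strict_subobj_def subobj_def submod_def by auto
  ultimately show "(C \<inter> B', snd B) \<in> G" by simp
qed

lemma V_elem_additive:
  assumes "V_elem \<theta>" and "fg_module B" "submod N B" "fg_module C"
    and "module_hom g B C" "g ` fst B = fst C" "hom_ker g B = N"
  shows "\<theta> B = \<theta> (N, snd B) + \<theta> C"
  using assms unfolding V_elem_def by blast

lemma V_elem_zero_module:
  assumes V: "V_elem \<theta>" and fg: "fg_module ({0}, \<rho>)"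
  shows "\<theta> ({0}, \<rho>) = 0"
proof -
  have "submod {0} ({0}, \<rho>)" using fg_module_right_module[OF fg] unfolding submod_def by simp
  moreover have "module_hom id ({0}, \<rho>) ({0}, \<rho>)" "hom_ker id ({0}, \<rho>) = {0}"
    unfolding module_hom_def hom_ker_def by auto
  ultimately have "\<theta> ({0}, \<rho>) = \<theta> ({0}, \<rho>) + \<theta> ({0}, \<rho>)"
    using V_elem_additive[OF V fg _ fg] by simp
  then show ?thesis by simp
qed

lemma V_elem_strict_morphism:
  assumes V: "V_elem \<theta>" and tc: "torsion_class G" and f: "strict_morphism G f X Y"
  shows "\<theta> X = \<theta> (hom_ker f X, snd X) + \<theta> (f ` fst X, snd Y)"
proof -
  have "fg_module X" "submod (hom_ker f X) X" "fg_module (f ` fst X, snd Y)"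
    using f torsion_class_fg[OF tc]
    unfolding strict_morphism_def strict_subobj_def subobj_def by auto
  moreover have "module_hom f X (f ` fst X, snd Y)"
    using f unfolding strict_morphism_def module_hom_def by auto
  ultimately show ?thesis using V_elem_additive[OF V] by simp
qed

lemma W_cls_strict_subobj:
  assumes tc: "torsion_class G" and "Y \<in> W_cls G \<theta>" and I: "strict_subobj G I Y"
    and "\<theta> (I, snd Y) = 0"
  shows "(I, snd Y) \<in> W_cls G \<theta>"
  using assms strict_subobj_trans[OF tc I]
  unfolding W_cls_def in_D_def strict_subobj_def[of G I] subobj_def by auto

lemma in_D_if_proper_strict_subobj_nonpos:
  assumes tc: "torsion_class G" and V: "V_elem \<theta>" and "(M, \<rho>) \<in> G" and "\<theta> (M, \<rho>) = 0"
    and proper: "\<And>A. strict_subobj G A (M, \<rho>) \<Longrightarrow> A \<noteq> {0} \<Longrightarrow> A \<noteq> M \<Longrightarrow> \<theta> (A, \<rho>) \<le> 0"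
  shows "in_D G \<theta> (M, \<rho>)"
  unfolding in_D_def
proof (intro conjI allI impI)
  fix A assume A: "strict_subobj G A (M, \<rho>)"
  then have "(A, \<rho>) \<in> G" unfolding strict_subobj_def subobj_def by simp
  then have "\<theta> ({0}, \<rho>) = 0" if "A = {0}"
    using V_elem_zero_module[OF V] torsion_class_fg[OF tc] that by simp
  then show "\<theta> (A, snd (M, \<rho>)) \<le> 0"
    using proper[OF A] \<open>\<theta> (M, \<rho>) = 0\<close> by (cases "A = {0} \<or> A = M") auto
qed fact

lemma W_cls_strict_morphism_ker_im:
  assumes tc: "torsion_class G" and V: "V_elem \<theta>" and X: "X \<in> W_cls G \<theta>" and Y: "Y \<in> W_cls G \<theta>"
    and f: "strict_morphism G f X Y"
  shows "(hom_ker f X, snd X) \<in> W_cls G \<theta>" and "(f ` fst X, snd Y) \<in> W_cls G \<theta>"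
proof -
  have K: "strict_subobj G (hom_ker f X) X" and I: "strict_subobj G (f ` fst X) Y"
    using f unfolding strict_morphism_def by auto
  have "\<theta> X = \<theta> (hom_ker f X, snd X) + \<theta> (f ` fst X, snd Y)"
    by (rule V_elem_strict_morphism[OF V tc f])
  moreover have "\<theta> X = 0" "\<theta> (hom_ker f X, snd X) \<le> 0" "\<theta> (f ` fst X, snd Y) \<le> 0"
    using X Y K I unfolding W_cls_def in_D_def by auto
  ultimately have "\<theta> (hom_ker f X, snd X) = 0" "\<theta> (f ` fst X, snd Y) = 0" by linarith+
  then show "(hom_ker f X, snd X) \<in> W_cls G \<theta>" "(f ` fst X, snd Y) \<in> W_cls G \<theta>"
    using W_cls_strict_subobj[OF tc X K] W_cls_strict_subobj[OF tc Y I] by auto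
qed

lemma module_hom_inj_on_if_ker_zero:
  assumes X: "right_module X" and f: "module_hom f X Y" and ker: "hom_ker f X = {0}"
  shows "inj_on f (fst X)"
proof (rule inj_onI)
  fix x y assume x: "x \<in> fst X" and y: "y \<in> fst X" and "f x = f y"
  have rm: "right_module (fst X, snd X)" using X by simp
  have add: "f (u + v) = f u + f v" if "u \<in> fst X" "v \<in> fst X" for u v
    using f that unfolding module_hom_def by blast
  have 0: "0 \<in> fst X" and my: "- y \<in> fst X" and xy: "x + - y \<in> fst X"
    using right_module_zero_mem[OF rm] right_module_minus_mem[OF rm y]
      right_module_add_mem[OF rm x right_module_minus_mem[OF rm y]] by auto
  have "f (x + - y) = f (y + - y)" using add[OF x my] add[OF y my] \<open>f x = f y\<close> by simp
  also have "\<dots> = 0" using add[OF 0 0] by simp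
  finally have "x + - y \<in> hom_ker f X" using xy unfolding hom_ker_def by blast
  then show "x = y" using ker by simp
qed

lemma W0_cls_strict_morphism_zero_or_iso:
  assumes tc: "torsion_class G" and V: "V_elem \<theta>" and X: "X \<in> W0_cls G \<theta>" and Y: "Y \<in> W0_cls G \<theta>"
    and f: "strict_morphism G f X Y"
  shows "(\<forall>x\<in>fst X. f x = 0) \<or> mod_iso X Y"
proof -
  have K: "strict_subobj G (hom_ker f X) X" and I: "strict_subobj G (f ` fst X) Y"
    and hom: "module_hom f X Y" and "X \<in> G"
    using f unfolding strict_morphism_def by auto
  have "X \<in> W_cls G \<theta>" "Y \<in> W_cls G \<theta>" using X Y unfolding W0_cls_def by auto
  note ker_im = W_cls_strict_morphism_ker_im[OF tc V this f]
  have "hom_ker f X = {0} \<or> hom_ker f X = fst X"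
    using X K ker_im(1) unfolding W0_cls_def by blast
  moreover have "f ` fst X = {0} \<or> f ` fst X = fst Y"
    using Y I ker_im(2) unfolding W0_cls_def by blast
  moreover have "mod_iso X Y" if "hom_ker f X = {0}" "f ` fst X = fst Y"
  proof -
    have "inj_on f (fst X)"
      using module_hom_inj_on_if_ker_zero fg_module_right_module torsion_class_fg tc \<open>X \<in> G\<close> hom that(1)
      by blast
    then show ?thesis using hom that(2) unfolding mod_iso_def bij_betw_def by blast
  qed
  ultimately show ?thesis unfolding hom_ker_def by blast
qed

lemma downcrossing_zero:
  fixes g :: "real \<Rightarrow> real"
  assumes diff: "\<And>x. g differentiable (at x)" and "t < u" and "0 \<le> g t" and "g u < 0"
  obtains s where "t \<le> s" "s < u" "g s = 0" "deriv g s \<le> 0"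
proof -
  have D: "DERIV g x :> deriv g x" for x
    using diff DERIV_deriv_iff_real_differentiable by blast
  have cont: "continuous_on S g" for S
    using D by (meson DERIV_isCont continuous_at_imp_continuous_on)
  \<comment> \<open>The last zero of g before u: a positive derivative there would force a later zero.\<close>
  define Z where "Z = {s. t \<le> s \<and> s \<le> u \<and> g s = 0}"
  have zero_between: "\<exists>s\<in>Z. a \<le> s" if "t \<le> a" "a \<le> u" "0 \<le> g a" for a
  proof -
    have "\<exists>s\<ge>a. s \<le> u \<and> g s = 0" by (rule IVT2') (use that \<open>g u < 0\<close> cont in auto)
    then show ?thesis using that(1) unfolding Z_def by (blast intro: order_trans)
  qed
  have "Z = {t..u} \<inter> {s. g s = 0}" by (auto simp: Z_def)
  then have "closed Z"
    using closed_Collect_eq[OF cont continuous_on_const] by (simp add: closed_Int)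
  moreover have "Z \<noteq> {}" "bdd_above Z"
    using zero_between[of t] \<open>t < u\<close> \<open>0 \<le> g t\<close> by (auto simp: Z_def bdd_above_def)
  ultimately have "Sup Z \<in> Z" by (rule closed_contains_Sup[rotated 2])
  define s0 where "s0 = Sup Z"
  have s0: "t \<le> s0" "s0 < u" "g s0 = 0"
    using \<open>Sup Z \<in> Z\<close> \<open>g u < 0\<close> by (auto simp: Z_def s0_def less_le)
  have "deriv g s0 \<le> 0"
  proof (rule ccontr)
    assume "\<not> deriv g s0 \<le> 0"
    then obtain d where d: "d > 0" "\<forall>h>0. h < d \<longrightarrow> 0 < g (s0 + h)"
      using DERIV_pos_inc_right[OF D] s0(3) by (metis not_le)
    define h where "h = min (d/2) ((u - s0)/2)"
    have h: "0 < h" "h < d" "h < u - s0" using d s0 by (auto simp: h_def min_def)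
    then have "0 < g (s0 + h)" using d by simp
    then obtain s where "s \<in> Z" "s0 + h \<le> s"
      using zero_between[of "s0 + h"] h s0 by auto
    moreover have "s \<le> s0"
      unfolding s0_def using \<open>s \<in> Z\<close> \<open>bdd_above Z\<close> by (rule cSup_upper)
    ultimately show False using h by linarith
  qed
  with s0 that show thesis by blast
qed

lemma pos_if_zeros_increasing:
  fixes g :: "real \<Rightarrow> real"
  assumes diff: "\<And>x. g differentiable (at x)" and "t < t1" and "0 \<le> g t"
    and zeros: "\<And>s. t \<le> s \<Longrightarrow> s \<le> t1 \<Longrightarrow> g s = 0 \<Longrightarrow> 0 < deriv g s"
  shows "0 < g t1"
proof (rule ccontr)
  assume "\<not> 0 < g t1"
  obtain u where u: "t < u" "u \<le> t1" "g u < 0"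
  proof (cases "g t1 < 0")
    case True
    then show ?thesis using that \<open>t < t1\<close> by auto
  next
    case False
    then have "g t1 = 0" using \<open>\<not> 0 < g t1\<close> by auto
    moreover have "0 < deriv g t1" using zeros \<open>g t1 = 0\<close> \<open>t < t1\<close> by simp
    moreover have "DERIV g t1 :> deriv g t1"
      using diff DERIV_deriv_iff_real_differentiable by blast
    ultimately obtain d where d: "d > 0" "\<forall>h>0. h < d \<longrightarrow> g (t1 - h) < 0"
      using DERIV_pos_inc_left by metis
    define h where "h = min (d/2) ((t1 - t)/2)"
    have "0 < h" "h < d" "h < t1 - t" using d \<open>t < t1\<close> by (auto simp: h_def min_def)
    then show ?thesis using that[of "t1 - h"] d by auto
  qed
  then obtain s where "t \<le> s" "s < u" "g s = 0" "deriv g s \<le> 0"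
    using downcrossing_zero[OF diff] \<open>0 \<le> g t\<close> by blast
  then show False using zeros[of s] u by simp
qed

lemma smooth_green_path_V_elem: "smooth_green_path G \<theta> \<Longrightarrow> V_elem (\<theta> t)"
  unfolding smooth_green_path_def by simp

lemma smooth_green_path_differentiable:
  assumes "smooth_green_path G \<theta>" and "fg_module X"
  shows "(\<lambda>t. \<theta> t X) differentiable (at s)"
proof -
  have "smooth_real (\<lambda>t. \<theta> t X)" using assms unfolding smooth_green_path_def by meson
  then have "(deriv ^^ 0) (\<lambda>t. \<theta> t X) differentiable (at s)" unfolding smooth_real_def by blast
  then show ?thesis by simp
qed

lemma smooth_green_path_deriv_pos:
  assumes "smooth_green_path G \<theta>" and "M \<in> G" "fst M \<noteq> {0}" "in_D G (\<theta> s) M"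
  shows "0 < deriv (\<lambda>t. \<theta> t M) s"
  using assms unfolding smooth_green_path_def by meson

lemma green_path_neg_before_semistable:
  fixes \<iota> :: "'k::field \<Rightarrow> 'l::ring_1" and G :: "('k, 'l) rmod set"
    and \<theta> :: "real \<Rightarrow> ('k, 'l) rmod \<Rightarrow> real"
  assumes fd: "fd_algebra \<iota>" and tc: "torsion_class G" and sg: "smooth_green_path G \<theta>"
    and "(N, \<rho>) \<in> G" "N \<noteq> {0}"
    and "\<And>A. strict_subobj G A (N, \<rho>) \<Longrightarrow> \<theta> t1 (A, \<rho>) \<le> 0" and "t < t1"
  shows "\<theta> t (N, \<rho>) < 0"
proof -
  obtain \<mu> :: "(nat \<Rightarrow> 'k) set \<Rightarrow> nat"
    where \<mu>: "\<And>A B. A \<subset> B \<Longrightarrow> B \<subseteq> N \<Longrightarrow> right_module (A, \<rho>) \<Longrightarrow> \<mu> A < \<mu> B"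
    using fg_module_length[OF fd torsion_class_fg[OF tc \<open>(N, \<rho>) \<in> G\<close>]] by blast
  have "\<theta> t (M, \<rho>) < 0"
    if "M \<subseteq> N" "(M, \<rho>) \<in> G" "M \<noteq> {0}" "\<forall>A. strict_subobj G A (M, \<rho>) \<longrightarrow> \<theta> t1 (A, \<rho>) \<le> 0"
      "t < t1" for M t
    using that
  proof (induction "\<mu> M" arbitrary: M t rule: less_induct)
    case less
    note M = less.prems(1-3) and semistable = less.prems(4)
    define g where "g = (\<lambda>s. \<theta> s (M, \<rho>))"
    have "0 < deriv g s" if s: "t \<le> s" "s \<le> t1" "g s = 0" for s
    proof -
      have "\<theta> s (A, \<rho>) \<le> 0" if A: "strict_subobj G A (M, \<rho>)" "A \<noteq> {0}" "A \<noteq> M" for A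
      proof (cases "s = t1")
        case True
        then show ?thesis using semistable A by simp
      next
        case False
        have "A \<subset> M" "(A, \<rho>) \<in> G" "right_module (A, \<rho>)"
          using A unfolding strict_subobj_def subobj_def submod_def by auto
        then have "\<mu> A < \<mu> M" using \<mu> M(1) by blast
        moreover have "\<forall>A'. strict_subobj G A' (A, \<rho>) \<longrightarrow> \<theta> t1 (A', \<rho>) \<le> 0"
          using semistable strict_subobj_trans[OF tc A(1)] by simp
        ultimately have "\<theta> s (A, \<rho>) < 0"
          using less.hyps \<open>A \<subset> M\<close> M(1) \<open>(A, \<rho>) \<in> G\<close> A(2) False s(2) by auto
        then show ?thesis by simp
      qed
      then have "in_D G (\<theta> s) (M, \<rho>)"
        using in_D_if_proper_strict_subobj_nonpos[OF tc smooth_green_path_V_elem[OF sg] M(2)] s(3)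
        unfolding g_def by blast
      then show ?thesis using smooth_green_path_deriv_pos[OF sg] M unfolding g_def by simp
    qed
    moreover have "g t1 \<le> 0"
      using semistable strict_subobj_refl[OF tc M(2)] by (simp add: g_def)
    moreover have "g differentiable (at x)" for x
      using smooth_green_path_differentiable[OF sg torsion_class_fg[OF tc M(2)]] by (simp add: g_def)
    ultimately have "0 \<le> g t \<Longrightarrow> 0 < g t1"
      using pos_if_zeros_increasing[of g t t1] \<open>t < t1\<close> by blast
    then show ?case using \<open>g t1 \<le> 0\<close> unfolding g_def by linarith
  qed
  then show ?thesis using assms by blast
qed

lemma strict_morphism_zero_if_W_earlier:
  fixes \<iota> :: "'k::field \<Rightarrow> 'l::ring_1" and G :: "('k, 'l) rmod set"
    and \<theta> :: "real \<Rightarrow> ('k, 'l) rmod \<Rightarrow> real"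
  assumes fd: "fd_algebra \<iota>" and tc: "torsion_class G" and sg: "smooth_green_path G \<theta>"
    and "t0 < t1" and X0: "X0 \<in> W_cls G (\<theta> t0)" and X1: "X1 \<in> W_cls G (\<theta> t1)"
    and f: "strict_morphism G f X0 X1"
  shows "\<forall>x\<in>fst X0. f x = 0"
proof (rule ccontr)
  assume "\<not> (\<forall>x\<in>fst X0. f x = 0)"
  then have "f ` fst X0 \<noteq> {0}" by auto
  have I: "strict_subobj G (f ` fst X0) X1" using f unfolding strict_morphism_def by blast
  have "\<theta> t0 (f ` fst X0, snd X1) < 0"
  proof (rule green_path_neg_before_semistable[OF fd tc sg])
    show "(f ` fst X0, snd X1) \<in> G" using I unfolding strict_subobj_def subobj_def by blast
    show "\<theta> t1 (A, snd X1) \<le> 0" if "strict_subobj G A (f ` fst X0, snd X1)" for A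
      using X1 strict_subobj_trans[OF tc I that] unfolding W_cls_def in_D_def by blast
  qed fact+
  moreover have "\<theta> t0 X0 = \<theta> t0 (hom_ker f X0, snd X0) + \<theta> t0 (f ` fst X0, snd X1)"
    using V_elem_strict_morphism[OF smooth_green_path_V_elem[OF sg] tc f] .
  moreover have "\<theta> t0 X0 = 0" "\<theta> t0 (hom_ker f X0, snd X0) \<le> 0"
    using X0 f unfolding W_cls_def in_D_def strict_morphism_def by auto
  ultimately show False by linarith
qed

theorem mainTheorem17:
  fixes \<iota> :: "'k::field \<Rightarrow> 'l::ring_1"
    and G :: "('k,'l) rmod set"
    and \<theta> :: "real \<Rightarrow> ('k,'l) rmod \<Rightarrow> real"
  assumes "fd_algebra \<iota>"
    and "torsion_class G"
    and "smooth_green_path G \<theta>"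
  shows "(\<forall>t0 t1 X0 X1 f. t0 < t1 \<longrightarrow> X0 \<in> W_cls G (\<theta> t0) \<longrightarrow> X1 \<in> W_cls G (\<theta> t1) \<longrightarrow>
            strict_morphism G f X0 X1 \<longrightarrow> (\<forall>x\<in>fst X0. f x = 0))
       \<and> (\<forall>t X Y f. X \<in> W0_cls G (\<theta> t) \<longrightarrow> Y \<in> W0_cls G (\<theta> t) \<longrightarrow> \<not> mod_iso X Y \<longrightarrow>
            strict_morphism G f X Y \<longrightarrow> (\<forall>x\<in>fst X. f x = 0))"
  using strict_morphism_zero_if_W_earlier[OF assms]
    W0_cls_strict_morphism_zero_or_iso[OF assms(2) smooth_green_path_V_elem[OF assms(3)]]
  by blast

end
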